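(* Let $G=(V,E)$ be a strongly biconnected directed graph, let $t\ge 1$, and let $w_0,w_1,\ldots,w_t$ be pairwise distinct vertices of $G$ such that $w_0 \overset{e}{\leftrightsquigarrow} w_t$ and $w_{i-1} \overset{e}{\leftrightsquigarrow} w_i$ for every $i\in\{1,2,\ldots,t\}$. Then $\{w_0,w_1,\ldots,w_t\}$ is contained in some $2$-edge-biconnected block of $G$.
   Context: All graphs are finite. A directed graph $H$ is strongly biconnected if $H$ is strongly connected and its underlying undirected graph is biconnected. A strongly biconnected component of a directed graph $H=(W,F)$ is a maximal vertex subset $C\subseteq W$ such that the induced subgraph $H[C]$ is strongly biconnected. For a strongly biconnected directed graph $G=(V,E)$ and an edge $b\in E$, $G\setminus\{b\}=(V,E\setminus\{b\})$. For distinct $x,y\in V$, write $x \overset{e}{\leftrightsquigarrow} y$ if for every edge $b\in E$ there is a strongly biconnected component of $G\setminus\{b\}$ containing both $x$ and $y$. A $2$-edge-biconnected block of $G$ is a maximal vertex subset $U\subseteq V$ with $|U|>1$ such that $x \overset{e}{\leftrightsquigarrow} y$ for all distinct $x,y\in U$. *)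

theory Defs
  imports Main
begin

definition strongly_connected :: "'a set \<Rightarrow> ('a \<times> 'a) set \<Rightarrow> bool" where
  "strongly_connected V E \<longleftrightarrow>
     V \<noteq> {} \<and> (\<forall>x\<in>V. \<forall>y\<in>V. (x, y) \<in> (E \<inter> (V \<times> V))\<^sup>*)"

definition ucconnected :: "'a set \<Rightarrow> ('a \<times> 'a) set \<Rightarrow> bool" where
  "ucconnected V E \<longleftrightarrow>
     V \<noteq> {} \<and> (\<forall>x\<in>V. \<forall>y\<in>V. (x, y) \<in> ((E \<union> E\<inverse>) \<inter> (V \<times> V))\<^sup>*)"

definition ubiconnected :: "'a set \<Rightarrow> ('a \<times> 'a) set \<Rightarrow> bool" where
  "ubiconnected V E \<longleftrightarrow>
     ucconnected V E \<and> 2 \<le> card V \<and> (\<forall>v\<in>V. ucconnected (V - {v}) E)"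

definition strongly_biconnected :: "'a set \<Rightarrow> ('a \<times> 'a) set \<Rightarrow> bool" where
  "strongly_biconnected V E \<longleftrightarrow> strongly_connected V E \<and> ubiconnected V E"

definition sb_component :: "'a set \<Rightarrow> ('a \<times> 'a) set \<Rightarrow> 'a set \<Rightarrow> bool" where
  "sb_component W F C \<longleftrightarrow>
     C \<subseteq> W \<and> strongly_biconnected C (F \<inter> (C \<times> C)) \<and>
     (\<forall>C'. C \<subseteq> C' \<and> C' \<subseteq> W \<and> strongly_biconnected C' (F \<inter> (C' \<times> C')) \<longrightarrow> C' = C)"

text \<open>x ~e~ y: for every edge b, some strongly biconnected component of G \ {b}
contains both x and y.\<close>
definition e_sb_related :: "'a set \<Rightarrow> ('a \<times> 'a) set \<Rightarrow> 'a \<Rightarrow> 'a \<Rightarrow> bool" where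
  "e_sb_related V E x y \<longleftrightarrow>
     (\<forall>b\<in>E. \<exists>C. sb_component V (E - {b}) C \<and> x \<in> C \<and> y \<in> C)"

definition two_edge_biconnected_block :: "'a set \<Rightarrow> ('a \<times> 'a) set \<Rightarrow> 'a set \<Rightarrow> bool" where
  "two_edge_biconnected_block V E U \<longleftrightarrow>
     U \<subseteq> V \<and> card U > 1 \<and>
     (\<forall>x\<in>U. \<forall>y\<in>U. x \<noteq> y \<longrightarrow> e_sb_related V E x y) \<and>
     (\<forall>U'. U \<subseteq> U' \<and> U' \<subseteq> V \<and> card U' > 1 \<and>
        (\<forall>x\<in>U'. \<forall>y\<in>U'. x \<noteq> y \<longrightarrow> e_sb_related V E x y) \<longrightarrow> U' = U)"

end

theory Submission
  imports Defs
begin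

text \<open>Fix an edge b. Consecutive vertices of the cycle w_0, ..., w_t, w_0 lie in
strongly biconnected components D_0, ..., D_t of G - b, and D_i, D_(i+1) share w_(i+1).
The union of the D_i is strongly connected, and it stays connected after deleting
one vertex: each D_i does, and since the w_i are distinct, the deletion cuts the cyclic
chain of shared vertices in at most one place. So the union is strongly biconnected
and, by maximality, equals every D_i; thus one component of G - b contains all w_i.
Hence the w_i are pairwise related, and a maximal such set is the required block.\<close>

locale block_cycle =
  fixes t :: nat and w :: "nat \<Rightarrow> 'a" and D :: "nat \<Rightarrow> 'a set"
  assumes nontrivial: "1 \<le> t"
    and own: "\<And>i. i \<le> t \<Longrightarrow> w i \<in> D i"
    and succ: "\<And>i. i < t \<Longrightarrow> w (Suc i) \<in> D i"
    and close: "w 0 \<in> D t"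

locale cycle_of_blocks = block_cycle t w D
  for t :: nat and w :: "nat \<Rightarrow> 'a" and D :: "nat \<Rightarrow> 'a set" +
  fixes P :: "'a \<Rightarrow> 'a \<Rightarrow> bool" and Z :: "'a set"
  assumes equiv: "equivp P"
    and block: "\<And>i x y. i \<le> t \<Longrightarrow> x \<in> D i - Z \<Longrightarrow> y \<in> D i - Z \<Longrightarrow> P x y"
    and hits_once: "\<And>i k. i \<le> t \<Longrightarrow> k \<le> t \<Longrightarrow> w i \<in> Z \<Longrightarrow> w k \<in> Z \<Longrightarrow> i = k"
begin

lemma P_sym: "P x y \<Longrightarrow> P y x"
  using equiv by (meson equivp_symp)

lemma P_trans [trans]: "P x y \<Longrightarrow> P y z \<Longrightarrow> P x z"
  using equiv by (meson equivp_transp)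

lemma path_related:
  assumes "a \<le> b" "b \<le> t" "\<And>m. a \<le> m \<Longrightarrow> m \<le> b \<Longrightarrow> w m \<notin> Z"
  shows "P (w a) (w b)"
  using assms
proof (induction b rule: dec_induct)
  case base
  then show ?case using equiv by (simp add: equivp_reflp)
next
  case (step n)
  have "P (w a) (w n)" using step by simp
  moreover have "P (w n) (w (Suc n))"
    using block[of n] own[of n] succ[of n] step.hyps step.prems by simp
  ultimately show ?case by (rule P_trans)
qed

lemma anchors_related_ordered:
  assumes "i \<le> k" "k \<le> t" "w i \<notin> Z" "w k \<notin> Z"
  shows "P (w i) (w k)"
proof (cases "\<forall>m. i \<le> m \<and> m \<le> k \<longrightarrow> w m \<notin> Z")
  case True
  then show ?thesis using path_related assms by blast
next
  case False
  then obtain j where j: "i < j" "j < k" "w j \<in> Z"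
    using assms by (metis le_less)
  have avoid: "w m \<notin> Z" if "m \<le> t" "m \<noteq> j" for m
    using hits_once[of m j] that j assms by auto
  have "P (w i) (w 0)" using path_related[of 0 i] avoid j assms by (auto intro: P_sym)
  also have "P (w 0) (w t)" using block[of t] own[of t] close avoid j assms by (auto intro: P_sym)
  also have "P (w t) (w k)" using path_related[of k t] avoid j assms by (auto intro: P_sym)
  finally show ?thesis .
qed

lemma anchors_related:
  assumes "i \<le> t" "k \<le> t" "w i \<notin> Z" "w k \<notin> Z"
  shows "P (w i) (w k)"
  using anchors_related_ordered[of i k] anchors_related_ordered[of k i] assms
  by (cases "i \<le> k") (auto intro: P_sym)

lemma block_has_anchor:
  assumes "i \<le> t" "x \<in> D i - Z"
  shows "\<exists>m\<le>t. w m \<notin> Z \<and> P x (w m)"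
proof -
  obtain n where n: "n \<le> t" "n \<noteq> i" "w n \<in> D i"
  proof (cases "i = t")
    case True
    then show ?thesis using that[of 0] close nontrivial by simp
  next
    case False
    then show ?thesis using that[of "Suc i"] succ[of i] assms(1) by simp
  qed
  then obtain m where "m \<le> t" "w m \<in> D i - Z"
    using hits_once[of i n] own[of i] assms(1) by blast
  then show ?thesis using block assms by blast
qed

theorem related:
  assumes "i \<le> t" "k \<le> t" "x \<in> D i - Z" "y \<in> D k - Z"
  shows "P x y"
proof -
  obtain m n where "m \<le> t" "w m \<notin> Z" "P x (w m)" "n \<le> t" "w n \<notin> Z" "P y (w n)"
    using block_has_anchor assms by meson
  then show ?thesis using anchors_related by (meson P_sym P_trans)
qed

end

lemma equivp_mutually_reachable: "equivp (\<lambda>x y. (x, y) \<in> R\<^sup>* \<and> (y, x) \<in> R\<^sup>*)"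
  by (intro equivpI reflpI sympI transpI) (auto intro: rtrancl_trans)

lemma ucconnected_remove_at_most_one:
  assumes "ubiconnected V E" "Z \<subseteq> {v}"
  shows "ucconnected (V - Z) E"
proof -
  have "Z = {} \<or> Z = {v}" using assms(2) by blast
  moreover have "V - {v} = V" if "v \<notin> V" using that by blast
  ultimately show ?thesis using assms(1) unfolding ubiconnected_def by fastforce
qed

locale biconnected_cycle = block_cycle t w D
  for t :: nat and w :: "nat \<Rightarrow> 'a" and D :: "nat \<Rightarrow> 'a set" +
  fixes F :: "('a \<times> 'a) set"
  assumes inj: "inj_on w {0..t}"
    and biconnected: "\<And>i. i \<le> t \<Longrightarrow> strongly_biconnected (D i) (F \<inter> D i \<times> D i)"
begin

definition union :: "'a set" where
  "union = (\<Union>i\<le>t. D i)"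

lemma block_subset_union: "i \<le> t \<Longrightarrow> D i \<subseteq> union"
  unfolding union_def by blast

lemma cycle_of_blocksI:
  assumes "equivp P" "Z \<subseteq> {v}"
    and "\<And>i x y. i \<le> t \<Longrightarrow> x \<in> D i - Z \<Longrightarrow> y \<in> D i - Z \<Longrightarrow> P x y"
  shows "cycle_of_blocks t w D P Z"
proof
  fix i k assume "i \<le> t" "k \<le> t" "w i \<in> Z" "w k \<in> Z"
  then have "w i = w k" using assms(2) by blast
  then show "i = k" using inj \<open>i \<le> t\<close> \<open>k \<le> t\<close> by (auto dest: inj_onD)
qed (use assms in auto)

lemma distinct_anchors: "w 0 \<noteq> w 1" "w 0 \<in> union" "w 1 \<in> union"
  using inj nontrivial own[of 0] own[of 1] block_subset_union[of 0] block_subset_union[of 1]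
  by (auto dest: inj_onD)

lemma strongly_connected_union: "strongly_connected union (F \<inter> union \<times> union)"
  unfolding strongly_connected_def
proof (intro conjI ballI)
  show "union \<noteq> {}" using distinct_anchors by blast
  define R where "R = F \<inter> union \<times> union \<inter> union \<times> union"
  have "(x, y) \<in> R\<^sup>* \<and> (y, x) \<in> R\<^sup>*" if "i \<le> t" "x \<in> D i" "y \<in> D i" for i x y
  proof -
    have "F \<inter> D i \<times> D i \<inter> D i \<times> D i \<subseteq> R"
      using block_subset_union[OF \<open>i \<le> t\<close>] unfolding R_def by blast
    moreover have "(x, y) \<in> (F \<inter> D i \<times> D i \<inter> D i \<times> D i)\<^sup>*"
      and "(y, x) \<in> (F \<inter> D i \<times> D i \<inter> D i \<times> D i)\<^sup>*"
      using biconnected[OF \<open>i \<le> t\<close>] that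
      unfolding strongly_biconnected_def strongly_connected_def by auto
    ultimately show ?thesis using rtrancl_mono by blast
  qed
  then interpret cycle_of_blocks t w D "\<lambda>x y. (x, y) \<in> R\<^sup>* \<and> (y, x) \<in> R\<^sup>*" "{}"
    by (intro cycle_of_blocksI equivp_mutually_reachable) auto
  fix x y assume "x \<in> union" "y \<in> union"
  then obtain i k where "i \<le> t" "x \<in> D i" "k \<le> t" "y \<in> D k"
    unfolding union_def by blast
  then show "(x, y) \<in> (F \<inter> union \<times> union \<inter> union \<times> union)\<^sup>*"
    using related[of i k x y] unfolding R_def by blast
qed

lemma ucconnected_union_minus:
  assumes "Z \<subseteq> {v}"
  shows "ucconnected (union - Z) (F \<inter> union \<times> union)"
  unfolding ucconnected_def
proof (intro conjI ballI)
  show "union - Z \<noteq> {}" using distinct_anchors assms by blast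
  define F' where "F' = F \<inter> union \<times> union"
  define R where "R = (F' \<union> F'\<inverse>) \<inter> (union - Z) \<times> (union - Z)"
  have "(x, y) \<in> R\<^sup>* \<and> (y, x) \<in> R\<^sup>*" if "i \<le> t" "x \<in> D i - Z" "y \<in> D i - Z" for i x y
  proof -
    define G where "G = F \<inter> D i \<times> D i"
    have "(G \<union> G\<inverse>) \<inter> (D i - Z) \<times> (D i - Z) \<subseteq> R"
      using block_subset_union[OF \<open>i \<le> t\<close>] unfolding R_def F'_def G_def by blast
    moreover have "ubiconnected (D i) G"
      using biconnected[OF \<open>i \<le> t\<close>] unfolding strongly_biconnected_def G_def by blast
    then have "ucconnected (D i - Z) G"
      by (rule ucconnected_remove_at_most_one[OF _ assms])
    then have "(x, y) \<in> ((G \<union> G\<inverse>) \<inter> (D i - Z) \<times> (D i - Z))\<^sup>*"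
      and "(y, x) \<in> ((G \<union> G\<inverse>) \<inter> (D i - Z) \<times> (D i - Z))\<^sup>*"
      using that unfolding ucconnected_def by auto
    ultimately show ?thesis using rtrancl_mono by blast
  qed
  then interpret cycle_of_blocks t w D "\<lambda>x y. (x, y) \<in> R\<^sup>* \<and> (y, x) \<in> R\<^sup>*" Z
    by (intro cycle_of_blocksI[OF _ assms] equivp_mutually_reachable)
  fix x y assume "x \<in> union - Z" "y \<in> union - Z"
  then obtain i k where "i \<le> t" "x \<in> D i - Z" "k \<le> t" "y \<in> D k - Z"
    unfolding union_def by blast
  then show "(x, y) \<in> ((F' \<union> F'\<inverse>) \<inter> (union - Z) \<times> (union - Z))\<^sup>*"
    using related[of i k x y] unfolding R_def by blast
qed

lemma card_union: "2 \<le> card union"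
proof -
  have "finite (D i)" if "i \<le> t" for i
    using biconnected[OF that] card.infinite
    unfolding strongly_biconnected_def ubiconnected_def by fastforce
  then have "finite union" unfolding union_def by blast
  then have "card {w 0, w 1} \<le> card union"
    using distinct_anchors by (intro card_mono) auto
  then show ?thesis using distinct_anchors by simp
qed

theorem strongly_biconnected_union:
  "strongly_biconnected union (F \<inter> union \<times> union)"
  unfolding strongly_biconnected_def ubiconnected_def
  using strongly_connected_union ucconnected_union_minus[of "{}"] ucconnected_union_minus card_union
  by auto

end

lemma sb_component_containing_cycle:
  assumes "1 \<le> t" "inj_on w {0..t}"
    and "\<And>i. i < t \<Longrightarrow> \<exists>C. sb_component W F C \<and> w i \<in> C \<and> w (Suc i) \<in> C"
    and "\<exists>C. sb_component W F C \<and> w t \<in> C \<and> w 0 \<in> C"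
  shows "\<exists>C. sb_component W F C \<and> w ` {0..t} \<subseteq> C"
proof -
  have "\<exists>C. sb_component W F C \<and> w i \<in> C \<and> (i < t \<longrightarrow> w (Suc i) \<in> C) \<and> (i = t \<longrightarrow> w 0 \<in> C)"
    if "i \<in> {..t}" for i
    using that assms(3,4) by (cases "i = t") auto
  then obtain D where D: "\<And>i. i \<in> {..t} \<Longrightarrow> sb_component W F (D i) \<and> w i \<in> D i \<and>
      (i < t \<longrightarrow> w (Suc i) \<in> D i) \<and> (i = t \<longrightarrow> w 0 \<in> D i)"
    by metis
  then have component: "\<And>i. i \<le> t \<Longrightarrow> sb_component W F (D i)" by simp
  interpret biconnected_cycle t w D F
  proof
    show "strongly_biconnected (D i) (F \<inter> D i \<times> D i)" if "i \<le> t" for i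
      using component[OF that] unfolding sb_component_def by blast
  qed (use assms(1,2) D in auto)
  have "union \<subseteq> W"
    using component unfolding union_def sb_component_def by blast
  then have "union = D 0"
    using component[of 0] block_subset_union[of 0] strongly_biconnected_union
    unfolding sb_component_def by blast
  moreover have "w ` {0..t} \<subseteq> union"
    using own block_subset_union by fastforce
  ultimately show ?thesis using component[of 0] by auto
qed

lemma two_edge_biconnected_block_exists:
  assumes "finite V" "W \<subseteq> V" "1 < card W"
    and "\<forall>x\<in>W. \<forall>y\<in>W. x \<noteq> y \<longrightarrow> e_sb_related V E x y"
  shows "\<exists>U. two_edge_biconnected_block V E U \<and> W \<subseteq> U"
proof -
  define S where "S = {U. W \<subseteq> U \<and> U \<subseteq> V \<and> 1 < card U \<and>
    (\<forall>x\<in>U. \<forall>y\<in>U. x \<noteq> y \<longrightarrow> e_sb_related V E x y)}"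
  have "S \<subseteq> Pow V" unfolding S_def by blast
  then have "finite S" using assms(1) by (simp add: finite_subset)
  moreover have "W \<in> S" using assms unfolding S_def by blast
  ultimately obtain U where U: "U \<in> S" and maximal: "\<And>U'. U' \<in> S \<Longrightarrow> U \<subseteq> U' \<Longrightarrow> U = U'"
    using finite_has_maximal[of S] by blast
  then have "W \<subseteq> U" by (simp add: S_def)
  moreover have "two_edge_biconnected_block V E U"
    unfolding two_edge_biconnected_block_def
  proof (intro conjI allI impI)
    fix U' assume U': "U \<subseteq> U' \<and> U' \<subseteq> V \<and> 1 < card U' \<and>
      (\<forall>x\<in>U'. \<forall>y\<in>U'. x \<noteq> y \<longrightarrow> e_sb_related V E x y)"
    then have "U' \<in> S" using \<open>W \<subseteq> U\<close> unfolding S_def by auto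
    then show "U' = U" using maximal U' by metis
  qed (use U in \<open>simp_all add: S_def\<close>)
  ultimately show ?thesis by blast
qed

theorem mainTheorem3:
  fixes V :: "'a set" and E :: "('a \<times> 'a) set" and t :: nat and w :: "nat \<Rightarrow> 'a"
  assumes "finite V"
    and "E \<subseteq> V \<times> V"
    and "strongly_biconnected V E"
    and "t \<ge> 1"
    and "w ` {0..t} \<subseteq> V"
    and "inj_on w {0..t}"
    and "e_sb_related V E (w 0) (w t)"
    and "\<forall>i\<in>{1..t}. e_sb_related V E (w (i - 1)) (w i)"
  shows "\<exists>U. two_edge_biconnected_block V E U \<and> w ` {0..t} \<subseteq> U"
proof (rule two_edge_biconnected_block_exists)
  have "\<exists>C. sb_component V (E - {b}) C \<and> w ` {0..t} \<subseteq> C" if "b \<in> E" for b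
  proof (rule sb_component_containing_cycle)
    fix i assume "i < t"
    then have "e_sb_related V E (w i) (w (Suc i))" using assms(8) by force
    then show "\<exists>C. sb_component V (E - {b}) C \<and> w i \<in> C \<and> w (Suc i) \<in> C"
      using that unfolding e_sb_related_def by blast
  qed (use assms(4,6,7) that in \<open>auto simp: e_sb_related_def\<close>)
  then show "\<forall>x\<in>w ` {0..t}. \<forall>y\<in>w ` {0..t}. x \<noteq> y \<longrightarrow> e_sb_related V E x y"
    unfolding e_sb_related_def by blast
  show "1 < card (w ` {0..t})" using assms(4,6) by (simp add: card_image)
qed (use assms(1,5) in auto)

end
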